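(* Let $G$ be a separable, locally compact, compactly generated, unimodular group with identity $e$ and Haar measure $\mu$. Let $\nu_1,\nu_2$ be probability measures on $G$ with densities $F_1,F_2$ with respect to $\mu$, where $F_1,F_2$ are symmetric, integrable and bounded on $G$. Suppose there exists an open relatively compact neighbourhood $U$ of $e$ which generates $G$ such that $\inf_{U^2}F_2\ge r>0$ for some $r$, and such that $F_1$ has a second moment relative to $U$, i.e. $\int_G |x|_U^2F_1(x)\,d\mu(x)<\infty$. Then there exists a constant $C>1$ such that $\varepsilon_{\nu_1}(f,f)\le C\,\varepsilon_{\nu_2}(f,f)$ for all $f\in L^2(G)$.
   Context: $|x|_U=\min\{n\in\mathbb N: x\in U^n\}$. $R_\nu h(x)=\int_G h(xy^{-1})\,d\nu(y)$ on $L^2(G)$, $\Delta_\nu=I-R_\nu$, and $\varepsilon_\nu(f,f)=(\Delta_\nu f\,|\,f)$ with $(\cdot|\cdot)$ the inner product of $L^2(G)$. $F$ symmetric means $F(x^{-1})=F(x)$. *)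

theory Defs
  imports "HOL-Analysis.Analysis" "HOL-Probability.Probability_Measure"
begin

text \<open>Groups are written additively (type class topological_group_add, which is NOT
  assumed commutative): the product x y is x + y, the identity e is 0, x y^{-1} is x - y.\<close>

fun setpow :: "'a::monoid_add set \<Rightarrow> nat \<Rightarrow> 'a set" where
  "setpow U 0 = {0}"
| "setpow U (Suc n) = {x + y | x y. x \<in> U \<and> y \<in> setpow U n}"

definition word_length :: "'a::monoid_add set \<Rightarrow> 'a \<Rightarrow> nat" where
  "word_length U x = (LEAST n. x \<in> setpow U n)"

definition generates :: "'a::monoid_add set \<Rightarrow> bool" where
  "generates U \<longleftrightarrow> (\<Union>n. setpow U n) = UNIV"

definition haar_measure :: "'a::topological_group_add measure \<Rightarrow> bool" where
  "haar_measure \<mu> \<longleftrightarrow>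
     sets \<mu> = sets borel \<and>
     (\<forall>K. compact K \<longrightarrow> emeasure \<mu> K < \<infinity>) \<and>
     (\<forall>V. open V \<and> V \<noteq> {} \<longrightarrow> emeasure \<mu> V > 0) \<and>
     (\<forall>x. \<forall>A \<in> sets borel. emeasure \<mu> ((\<lambda>y. x + y) ` A) = emeasure \<mu> A)"

definition unimodular :: "'a::topological_group_add measure \<Rightarrow> bool" where
  "unimodular \<mu> \<longleftrightarrow> (\<forall>x. \<forall>A \<in> sets borel. emeasure \<mu> ((\<lambda>y. y + x) ` A) = emeasure \<mu> A)"

definition compactly_generated :: "'a::{topological_group_add} itself \<Rightarrow> bool" where
  "compactly_generated _ \<longleftrightarrow>
     (\<exists>U::'a set. open U \<and> 0 \<in> U \<and> compact (closure U) \<and> generates U)"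

definition L2 :: "'a measure \<Rightarrow> ('a \<Rightarrow> real) \<Rightarrow> bool" where
  "L2 \<mu> f \<longleftrightarrow> f \<in> borel_measurable \<mu> \<and> integrable \<mu> (\<lambda>x. (f x)\<^sup>2)"

definition conv_op :: "'a::group_add measure \<Rightarrow> ('a \<Rightarrow> real) \<Rightarrow> 'a \<Rightarrow> real" where
  "conv_op \<nu> h x = (\<integral>y. h (x - y) \<partial>\<nu>)"

definition laplacian :: "'a::group_add measure \<Rightarrow> ('a \<Rightarrow> real) \<Rightarrow> 'a \<Rightarrow> real" where
  "laplacian \<nu> h x = h x - conv_op \<nu> h x"

definition dirichlet_form :: "'a measure \<Rightarrow> 'a::group_add measure \<Rightarrow> ('a \<Rightarrow> real) \<Rightarrow> real" where
  "dirichlet_form \<mu> \<nu> f = (\<integral>x. laplacian \<nu> f x * f x \<partial>\<mu>)"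

end

theory Submission
  imports Defs
begin

text \<open>Let \<open>D(y) = \<integral> (f x - f (x - y))\<^sup>2 d\<mu>(x)\<close> be the translation energy of \<open>f\<close>.
  Right invariance of \<mu> and Fubini give \<open>\<epsilon>\<^sub>\<nu>(f,f) = \<integral> D d\<nu> / 2\<close> for every probability
  measure \<nu>. The energy is symmetric and satisfies \<open>D(a + b) \<le> (1 + t) D(b) + (1 + 1/t) D(a)\<close>,
  so \<open>D(y) \<le> |y|\<^sub>U\<^sup>2 sup\<^sub>U D\<close>. Averaging \<open>D(u) \<le> 2 D(v) + 2 D(v + u)\<close> over \<open>v \<in> U\<close>, where
  \<open>F\<^sub>2 \<ge> r\<close> at both \<open>v\<close> and \<open>v + u\<close>, bounds \<open>sup\<^sub>U D\<close> by \<open>8 \<epsilon>\<^sub>\<nu>\<^sub>2(f,f) / (r \<mu>(U))\<close>;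
  integrating \<open>D\<close> against \<open>\<nu>\<^sub>1\<close> and using the second moment of \<open>F\<^sub>1\<close> finishes the proof.\<close>

lemma borel_measurable_diff_group [measurable (raw)]:
  fixes f g :: "'a \<Rightarrow> 'b::{second_countable_topology, topological_group_add}"
  assumes "f \<in> borel_measurable M" and "g \<in> borel_measurable M"
  shows "(\<lambda>x. f x - g x) \<in> borel_measurable M"
  using assms by (rule borel_measurable_continuous_Pair) (intro continuous_intros)

lemma power2_add_le_weighted:
  fixes p q t :: real
  assumes "t > 0"
  shows "(p + q)\<^sup>2 \<le> (1 + t) * p\<^sup>2 + (1 + 1 / t) * q\<^sup>2"
proof -
  have "t * (p + q)\<^sup>2 + (t * p - q)\<^sup>2 = t * ((1 + t) * p\<^sup>2 + (1 + 1 / t) * q\<^sup>2)"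
    using assms by (simp add: field_simps power2_eq_square)
  then have "t * (p + q)\<^sup>2 \<le> t * ((1 + t) * p\<^sup>2 + (1 + 1 / t) * q\<^sup>2)"
    by (metis le_add_same_cancel1 zero_le_power2)
  then show ?thesis
    using assms by simp
qed

lemma power2_diff_le:
  fixes p q :: real
  shows "(p - q)\<^sup>2 \<le> 2 * p\<^sup>2 + 2 * q\<^sup>2"
  using power2_add_le_weighted[of 1 p "- q"] by simp

lemma abs_mult_diff_le:
  fixes a b :: real
  shows "\<bar>a * (a - b)\<bar> \<le> (3 * a\<^sup>2 + b\<^sup>2) / 2"
proof -
  have "0 \<le> (\<bar>a\<bar> - \<bar>b\<bar>)\<^sup>2"
    by simp
  then have "2 * (\<bar>a\<bar> * \<bar>b\<bar>) \<le> a\<^sup>2 + b\<^sup>2"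
    by (simp add: power2_diff)
  moreover have "\<bar>a * (a - b)\<bar> \<le> a\<^sup>2 + \<bar>a\<bar> * \<bar>b\<bar>"
    using abs_triangle_ineq4[of "a * a" "a * b"] by (simp add: right_diff_distrib abs_mult power2_eq_square)
  ultimately show ?thesis
    by simp
qed

lemma setpow_mono: "A \<subseteq> B \<Longrightarrow> setpow A n \<subseteq> setpow B n"
  by (induction n) auto

lemma compact_setpow:
  fixes K :: "'a::topological_group_add set"
  assumes "compact K"
  shows "compact (setpow K n)"
proof (induction n)
  case (Suc n)
  have "setpow K (Suc n) = (\<lambda>p. fst p + snd p) ` (K \<times> setpow K n)"
    by force
  moreover have "compact ((\<lambda>p. fst p + snd p) ` (K \<times> setpow K n))"
    by (intro compact_continuous_image compact_Times assms Suc continuous_intros)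
  ultimately show ?case
    by simp
qed simp

lemma setpow_word_length:
  assumes "generates U"
  shows "x \<in> setpow U (word_length U x)"
proof -
  have "\<exists>n. x \<in> setpow U n"
    using assms unfolding generates_def by blast
  then show ?thesis
    unfolding word_length_def by (rule LeastI_ex)
qed

lemma sigma_finite_if_generated_by_relatively_compact:
  fixes \<mu> :: "'a::{topological_group_add, t2_space} measure" and U :: "'a set"
  assumes sets_\<mu>: "sets \<mu> = sets borel"
    and compact_finite: "\<And>K. compact K \<Longrightarrow> emeasure \<mu> K < \<infinity>"
    and "compact (closure U)" and "generates U"
  shows "sigma_finite_measure \<mu>"
proof
  let ?A = "range (setpow (closure U))"
  have compact: "compact (setpow (closure U) n)" for n
    by (rule compact_setpow) fact
  have "x \<in> \<Union> ?A" for x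
    using setpow_word_length[OF \<open>generates U\<close>, of x] setpow_mono[OF closure_subset] by blast
  then have "\<Union> ?A = space \<mu>"
    using sets_eq_imp_space_eq[OF sets_\<mu>] by auto
  moreover have "?A \<subseteq> sets \<mu>"
    using compact by (auto simp: sets_\<mu> intro: borel_closed compact_imp_closed)
  moreover have "\<forall>a\<in>?A. emeasure \<mu> a \<noteq> \<infinity>"
    using compact compact_finite by (auto simp: less_top)
  ultimately show "\<exists>A. countable A \<and> A \<subseteq> sets \<mu> \<and> \<Union> A = space \<mu> \<and> (\<forall>a\<in>A. emeasure \<mu> a \<noteq> \<infinity>)"
    by (intro exI[of _ ?A]) auto
qed

lemma (in pair_sigma_finite) integrable_pair_measure_if_bounded_sections:
  fixes g :: "_ \<Rightarrow> real"
  assumes "finite_measure M2" and g: "g \<in> borel_measurable (M1 \<Otimes>\<^sub>M M2)"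
    and sections: "\<And>y. y \<in> space M2 \<Longrightarrow> integrable M1 (\<lambda>x. g (x, y))"
    and bounded: "\<And>y. y \<in> space M2 \<Longrightarrow> (\<integral>x. \<bar>g (x, y)\<bar> \<partial>M1) \<le> B"
  shows "integrable (M1 \<Otimes>\<^sub>M M2) g"
  unfolding integrable_iff_bounded
proof
  have "(\<integral>\<^sup>+p. norm (g p) \<partial>(M1 \<Otimes>\<^sub>M M2)) = (\<integral>\<^sup>+y. \<integral>\<^sup>+x. \<bar>g (x, y)\<bar> \<partial>M1 \<partial>M2)"
    using nn_integral_snd[of "\<lambda>p. ennreal \<bar>g p\<bar>"] g by simp
  also have "\<dots> \<le> (\<integral>\<^sup>+y. ennreal B \<partial>M2)"
    using sections bounded by (intro nn_integral_mono) (simp add: nn_integral_eq_integral ennreal_leI)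
  also have "\<dots> < \<infinity>"
    using finite_measure.emeasure_finite[OF \<open>finite_measure M2\<close>, of "space M2"]
    by (simp add: ennreal_mult_less_top less_top)
  finally show "(\<integral>\<^sup>+p. norm (g p) \<partial>(M1 \<Otimes>\<^sub>M M2)) < \<infinity>" .
qed (rule g)

lemma laplacian_mult_eq_integral:
  fixes f :: "'a::group_add \<Rightarrow> real"
  assumes "prob_space M" and "integrable M (\<lambda>y. f x * (f x - f (x - y)))"
  shows "laplacian M f x * f x = (\<integral>y. f x * (f x - f (x - y)) \<partial>M)"
proof -
  interpret prob_space M by fact
  have "f x = 0 \<or> integrable M (\<lambda>y. f x - f (x - y))"
    using assms(2) by simp
  then have "f x = 0 \<or> integrable M (\<lambda>y. f x - (f x - f (x - y)))"
    using Bochner_Integration.integrable_diff[OF integrable_const[of "f x"]] by blast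
  then have "f x = 0 \<or> integrable M (\<lambda>y. f (x - y))"
    by simp
  then show ?thesis
  proof
    assume "integrable M (\<lambda>y. f (x - y))"
    then have "(\<integral>y. f x - f (x - y) \<partial>M) = f x - conv_op M f x"
      unfolding conv_op_def using prob_space by simp
    then show ?thesis
      unfolding laplacian_def by (simp add: mult.commute)
  qed simp
qed

locale right_invariant_measure = sigma_finite_measure \<mu>
  for \<mu> :: "'a::{topological_group_add, second_countable_topology} measure" +
  assumes sets_eq_borel: "sets \<mu> = sets borel"
    and emeasure_translate_right: "\<And>c A. A \<in> sets borel \<Longrightarrow> emeasure \<mu> ((\<lambda>x. x + c) ` A) = emeasure \<mu> A"
begin

lemma space_eq_UNIV [simp]: "space \<mu> = UNIV"
  using sets_eq_imp_space_eq[OF sets_eq_borel] by simp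

lemma measurable_eq_borel: "measurable \<mu> M = measurable borel M"
  by (rule measurable_cong_sets[OF sets_eq_borel refl])

lemma measurable_into_eq_borel: "measurable M \<mu> = measurable M borel"
  by (rule measurable_cong_sets[OF refl sets_eq_borel])

lemma measurable_translate_right: "(\<lambda>x. x + c) \<in> measurable \<mu> \<mu>"
  unfolding measurable_eq_borel measurable_into_eq_borel
  by (intro borel_measurable_continuous_onI continuous_intros)

lemma distr_translate_right: "distr \<mu> \<mu> (\<lambda>x. x + c) = \<mu>"
proof (rule measure_eqI)
  fix A assume "A \<in> sets (distr \<mu> \<mu> (\<lambda>x. x + c))"
  then have A: "A \<in> sets borel"
    by (simp add: sets_eq_borel)
  have "(\<lambda>x. x + c) -` A = (\<lambda>x. x + - c) ` A"
    by (auto simp: image_iff) (metis add_diff_cancel)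
  then show "emeasure (distr \<mu> \<mu> (\<lambda>x. x + c)) A = emeasure \<mu> A"
    using A emeasure_translate_right[OF A, of "- c"]
    by (simp add: emeasure_distr[OF measurable_translate_right] sets_eq_borel del: diff_conv_add_uminus)
qed simp

lemma
  fixes g :: "'a \<Rightarrow> real"
  assumes "integrable \<mu> g"
  shows integrable_translate_right: "integrable \<mu> (\<lambda>x. g (x + c))"
    and integral_translate_right: "(\<integral>x. g (x + c) \<partial>\<mu>) = integral\<^sup>L \<mu> g"
  using integrable_distr_eq[OF measurable_translate_right, of g] integral_distr[OF measurable_translate_right, of g] assms
  by (simp_all add: distr_translate_right)

lemma L2_borel_measurable: "L2 \<mu> f \<Longrightarrow> f \<in> borel_measurable borel"
  unfolding L2_def measurable_eq_borel by simp

lemma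
  assumes "L2 \<mu> f"
  shows integrable_square_translate: "integrable \<mu> (\<lambda>x. (f (x - c))\<^sup>2)"
    and integral_square_translate: "(\<integral>x. (f (x - c))\<^sup>2 \<partial>\<mu>) = (\<integral>x. (f x)\<^sup>2 \<partial>\<mu>)"
  using integrable_translate_right[of "\<lambda>x. (f x)\<^sup>2" "- c"] integral_translate_right[of "\<lambda>x. (f x)\<^sup>2" "- c"] assms
  unfolding L2_def by simp_all

definition translation_energy :: "('a \<Rightarrow> real) \<Rightarrow> 'a \<Rightarrow> real" where
  "translation_energy f y = (\<integral>x. (f x - f (x - y))\<^sup>2 \<partial>\<mu>)"

lemma translation_energy_nonneg: "translation_energy f y \<ge> 0"
  unfolding translation_energy_def by simp

lemma translation_energy_zero [simp]: "translation_energy f 0 = 0"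
  unfolding translation_energy_def by simp

lemma integrable_square_diff_translate:
  assumes f: "L2 \<mu> f"
  shows "integrable \<mu> (\<lambda>x. (f x - f (x - y))\<^sup>2)"
proof (rule Bochner_Integration.integrable_bound)
  show "integrable \<mu> (\<lambda>x. 2 * (f x)\<^sup>2 + 2 * (f (x - y))\<^sup>2)"
    using f integrable_square_translate[OF f] unfolding L2_def by auto
  have [measurable]: "f \<in> borel_measurable borel"
    using L2_borel_measurable[OF f] .
  show "(\<lambda>x. (f x - f (x - y))\<^sup>2) \<in> borel_measurable \<mu>"
    unfolding measurable_eq_borel by measurable
qed (simp add: power2_diff_le)

lemma translation_energy_uminus:
  assumes "L2 \<mu> f"
  shows "translation_energy f (- y) = translation_energy f y"
proof -
  have "(\<lambda>x. (f (x + - y) - f (x + - y - - y))\<^sup>2) = (\<lambda>x. (f x - f (x - y))\<^sup>2)"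
    by (rule ext) (metis power2_commute diff_add_cancel diff_conv_add_uminus minus_minus)
  then show ?thesis
    using integral_translate_right[OF integrable_square_diff_translate[OF assms, of "- y"], of "- y"]
    unfolding translation_energy_def by simp
qed

lemma translation_energy_add_le:
  assumes f: "L2 \<mu> f" and "t > 0"
  shows "translation_energy f (a + b) \<le> (1 + t) * translation_energy f b + (1 + 1 / t) * translation_energy f a"
proof -
  have int_b: "integrable \<mu> (\<lambda>x. (f x - f (x - b))\<^sup>2)"
    and int_a: "integrable \<mu> (\<lambda>x. (f (x - b) - f (x - b - a))\<^sup>2)"
    using integrable_square_diff_translate[OF f]
      integrable_translate_right[OF integrable_square_diff_translate[OF f, of a], of "- b"]
    by simp_all
  have shift: "x - (a + b) = x - b - a" for x :: 'a
    by (metis diff_conv_add_uminus minus_add add.assoc)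
  have "translation_energy f (a + b)
      \<le> (\<integral>x. (1 + t) * (f x - f (x - b))\<^sup>2 + (1 + 1 / t) * (f (x - b) - f (x - b - a))\<^sup>2 \<partial>\<mu>)"
    unfolding translation_energy_def
  proof (rule integral_mono)
    fix x
    show "(f x - f (x - (a + b)))\<^sup>2 \<le> (1 + t) * (f x - f (x - b))\<^sup>2 + (1 + 1 / t) * (f (x - b) - f (x - b - a))\<^sup>2"
      using power2_add_le_weighted[OF \<open>t > 0\<close>, of "f x - f (x - b)" "f (x - b) - f (x - b - a)"]
      by (simp add: shift)
  qed (use int_a int_b integrable_square_diff_translate[OF f] in simp_all)
  also have "\<dots> = (1 + t) * translation_energy f b + (1 + 1 / t) * translation_energy f a"
    unfolding translation_energy_def
    using int_b int_a integral_translate_right[OF integrable_square_diff_translate[OF f, of a], of "- b"]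
    by simp
  finally show ?thesis .
qed

lemma translation_energy_setpow_le:
  assumes f: "L2 \<mu> f" and "B \<ge> 0" and bound: "\<And>u. u \<in> U \<Longrightarrow> translation_energy f u \<le> B"
  shows "y \<in> setpow U n \<Longrightarrow> translation_energy f y \<le> (real n)\<^sup>2 * B"
proof (induction n arbitrary: y)
  case (Suc n)
  then obtain u z where y: "y = u + z" and u: "u \<in> U" and z: "z \<in> setpow U n"
    by auto
  show ?case
  proof (cases "n = 0")
    case True
    then show ?thesis
      using y z bound[OF u] by simp
  next
    case False
    \<comment> \<open>weight \<open>t = 1/n\<close> makes \<open>(1 + 1/n) n\<^sup>2 + (1 + n) = (n + 1)\<^sup>2\<close>\<close>
    have "translation_energy f y \<le> (1 + 1 / real n) * translation_energy f z + (1 + 1 / (1 / real n)) * translation_energy f u"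
      unfolding y using False by (intro translation_energy_add_le[OF f]) simp
    also have "\<dots> \<le> (1 + 1 / real n) * ((real n)\<^sup>2 * B) + (1 + real n) * B"
      using Suc.IH[OF z] bound[OF u] by (intro add_mono mult_left_mono) auto
    also have "\<dots> = (real (Suc n))\<^sup>2 * B"
      using False by (simp add: power2_eq_square field_simps)
    finally show ?thesis .
  qed
qed simp

lemma translation_energy_le_word_length:
  assumes "L2 \<mu> f" and "generates U" and "B \<ge> 0" and "\<And>u. u \<in> U \<Longrightarrow> translation_energy f u \<le> B"
  shows "translation_energy f y \<le> (real (word_length U y))\<^sup>2 * B"
  using translation_energy_setpow_le[OF assms(1,3,4) setpow_word_length[OF assms(2)]] .

lemma
  assumes f: "L2 \<mu> f"
  shows integrable_mult_diff_translate: "integrable \<mu> (\<lambda>x. f x * (f x - f (x - y)))"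
    and integral_mult_diff_translate: "(\<integral>x. f x * (f x - f (x - y)) \<partial>\<mu>) = translation_energy f y / 2"
proof -
  have eq: "(\<lambda>x. f x * (f x - f (x - y)))
      = (\<lambda>x. ((f x - f (x - y))\<^sup>2 + (f x)\<^sup>2 - (f (x - y))\<^sup>2) / 2)"
    by (rule ext) (simp add: power2_eq_square algebra_simps)
  have ints: "integrable \<mu> (\<lambda>x. (f x - f (x - y))\<^sup>2)" "integrable \<mu> (\<lambda>x. (f x)\<^sup>2)"
      "integrable \<mu> (\<lambda>x. (f (x - y))\<^sup>2)"
    using integrable_square_diff_translate[OF f] f integrable_square_translate[OF f]
    unfolding L2_def by auto
  then show "integrable \<mu> (\<lambda>x. f x * (f x - f (x - y)))"
    unfolding eq by simp
  show "(\<integral>x. f x * (f x - f (x - y)) \<partial>\<mu>) = translation_energy f y / 2"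
    unfolding eq translation_energy_def using ints integral_square_translate[OF f, of y] by simp
qed

lemma integral_abs_mult_diff_translate_le:
  assumes f: "L2 \<mu> f"
  shows "(\<integral>x. \<bar>f x * (f x - f (x - y))\<bar> \<partial>\<mu>) \<le> 2 * (\<integral>x. (f x)\<^sup>2 \<partial>\<mu>)"
proof -
  have "(\<integral>x. \<bar>f x * (f x - f (x - y))\<bar> \<partial>\<mu>) \<le> (\<integral>x. (3 * (f x)\<^sup>2 + (f (x - y))\<^sup>2) / 2 \<partial>\<mu>)"
    using f integrable_mult_diff_translate[OF f] integrable_square_translate[OF f] abs_mult_diff_le
    unfolding L2_def by (intro integral_mono) simp_all
  also have "\<dots> = 2 * (\<integral>x. (f x)\<^sup>2 \<partial>\<mu>)"
    using f integrable_square_translate[OF f] integral_square_translate[OF f]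
    unfolding L2_def by simp
  finally show ?thesis .
qed

lemma dirichlet_form_eq_integral_translation_energy:
  assumes f: "L2 \<mu> f" and "prob_space \<nu>" and sets_\<nu>: "sets \<nu> = sets borel"
  shows "integrable \<nu> (translation_energy f)"
    and "dirichlet_form \<mu> \<nu> f = (\<integral>y. translation_energy f y \<partial>\<nu>) / 2"
proof -
  interpret \<nu>: prob_space \<nu> by fact
  interpret pair_sigma_finite \<mu> \<nu> ..
  have [measurable]: "f \<in> borel_measurable borel"
    using L2_borel_measurable[OF f] .
  have space_\<nu> [simp]: "space \<nu> = UNIV"
    using sets_eq_imp_space_eq[OF sets_\<nu>] by simp
  define g where "g x y = f x * (f x - f (x - y))" for x y
  have sets_pair: "sets (\<mu> \<Otimes>\<^sub>M \<nu>) = sets (borel \<Otimes>\<^sub>M borel)"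
    by (rule sets_pair_measure_cong[OF sets_eq_borel sets_\<nu>])
  have "case_prod g \<in> borel_measurable (\<mu> \<Otimes>\<^sub>M \<nu>)"
    unfolding measurable_cong_sets[OF sets_pair refl] g_def by measurable
  moreover note integral_abs_mult_diff_translate_le[OF f]
  ultimately have g: "integrable (\<mu> \<Otimes>\<^sub>M \<nu>) (case_prod g)"
    using integrable_mult_diff_translate[OF f]
    by (intro integrable_pair_measure_if_bounded_sections) (auto simp: g_def \<nu>.finite_measure_axioms)
  have sections: "(\<integral>x. g x y \<partial>\<mu>) = translation_energy f y / 2" for y
    unfolding g_def by (rule integral_mult_diff_translate[OF f])
  show "integrable \<nu> (translation_energy f)"
    using integrable_mult_left[OF integrable_snd[OF g], of 2] by (simp add: sections)
  have "case_prod (\<lambda>x y. f (x - y)) \<in> borel_measurable (\<mu> \<Otimes>\<^sub>M \<nu>)"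
    unfolding measurable_cong_sets[OF sets_pair refl] by measurable
  then have "(\<lambda>x. \<integral>y. f (x - y) \<partial>\<nu>) \<in> borel_measurable \<mu>"
    by (rule \<nu>.borel_measurable_lebesgue_integral)
  moreover have "f \<in> borel_measurable \<mu>"
    unfolding measurable_eq_borel by simp
  ultimately have laplacian_measurable: "(\<lambda>x. laplacian \<nu> f x * f x) \<in> borel_measurable \<mu>"
    unfolding laplacian_def conv_op_def by simp
  have laplacian_eq: "AE x in \<mu>. laplacian \<nu> f x * f x = (\<integral>y. g x y \<partial>\<nu>)"
    using AE_integrable_fst[OF g] by eventually_elim (simp add: g_def laplacian_mult_eq_integral[OF \<open>prob_space \<nu>\<close>])
  have "dirichlet_form \<mu> \<nu> f = (\<integral>x. \<integral>y. g x y \<partial>\<nu> \<partial>\<mu>)"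
    unfolding dirichlet_form_def
    using laplacian_measurable borel_measurable_integrable[OF integrable_fst[OF g]] laplacian_eq
    by (rule integral_cong_AE)
  also have "\<dots> = (\<integral>y. \<integral>x. g x y \<partial>\<mu> \<partial>\<nu>)"
    using Fubini_integral[OF g] ..
  also have "\<dots> = (\<integral>y. translation_energy f y \<partial>\<nu>) / 2"
    by (simp add: sections)
  finally show "dirichlet_form \<mu> \<nu> f = (\<integral>y. translation_energy f y \<partial>\<nu>) / 2" .
qed

lemma dirichlet_form_density:
  assumes f: "L2 \<mu> f" and F: "F \<in> borel_measurable \<mu>" "\<And>x. F x \<ge> 0"
    and "prob_space (density \<mu> (\<lambda>x. ennreal (F x)))"
  shows "integrable \<mu> (\<lambda>y. F y * translation_energy f y)"
    and "dirichlet_form \<mu> (density \<mu> (\<lambda>x. ennreal (F x))) f = (\<integral>y. F y * translation_energy f y \<partial>\<mu>) / 2"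
proof -
  have sets: "sets (density \<mu> (\<lambda>x. ennreal (F x))) = sets borel"
    by (simp add: sets_eq_borel)
  note energy = dirichlet_form_eq_integral_translation_energy[OF f assms(4) sets]
  have "translation_energy f \<in> borel_measurable \<mu>"
    using borel_measurable_integrable[OF energy(1)] by (simp add: measurable_eq_borel measurable_cong_sets[OF sets refl])
  then show "integrable \<mu> (\<lambda>y. F y * translation_energy f y)"
    and "dirichlet_form \<mu> (density \<mu> (\<lambda>x. ennreal (F x))) f = (\<integral>y. F y * translation_energy f y \<partial>\<mu>) / 2"
    using energy integrable_density[of "translation_energy f" \<mu> F] integral_density[of "translation_energy f" \<mu> F] F
    by simp_all
qed

lemma translation_energy_le_two_shifts:
  assumes f: "L2 \<mu> f"
  shows "translation_energy f u \<le> 2 * translation_energy f v + 2 * translation_energy f (v + u)"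
proof -
  have "translation_energy f (- v + (v + u)) \<le> (1 + 1) * translation_energy f (v + u) + (1 + 1 / 1) * translation_energy f (- v)"
    by (rule translation_energy_add_le[OF f]) simp
  then show ?thesis
    by (simp add: add.assoc[symmetric] translation_energy_uminus[OF f])
qed

lemma measure_mult_translation_energy_le:
  assumes f: "L2 \<mu> f" and F_nonneg: "\<And>x. F x \<ge> 0"
    and FD: "integrable \<mu> (\<lambda>v. F v * translation_energy f v)"
    and F_lower: "\<forall>x \<in> setpow U 2. F x \<ge> r" and "r > 0"
    and "0 \<in> U" and "U \<in> sets borel" and "emeasure \<mu> U < \<infinity>" and u: "u \<in> U"
  shows "measure \<mu> U * translation_energy f u \<le> 4 / r * (\<integral>v. F v * translation_energy f v \<partial>\<mu>)"
proof -
  let ?E = "\<lambda>v. F v * translation_energy f v"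
  have in_setpow2: "a + b \<in> setpow U 2" if "a \<in> U" "b \<in> U" for a b
    using that by (auto simp: numeral_2_eq_2)
  have pointwise: "translation_energy f u * indicator U v \<le> 2 / r * ?E v + 2 / r * ?E (v + u)" for v
  proof (cases "v \<in> U")
    case True
    have "r \<le> F v" "r \<le> F (v + u)"
      using F_lower in_setpow2[OF True \<open>0 \<in> U\<close>] in_setpow2[OF True u] by auto
    then have "r * translation_energy f v \<le> ?E v" "r * translation_energy f (v + u) \<le> ?E (v + u)"
      using translation_energy_nonneg by (auto intro: mult_right_mono)
    moreover have "r * translation_energy f u \<le> r * (2 * translation_energy f v + 2 * translation_energy f (v + u))"
      using translation_energy_le_two_shifts[OF f, of u v] \<open>r > 0\<close> by simp
    ultimately have "r * translation_energy f u \<le> 2 * ?E v + 2 * ?E (v + u)"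
      by (simp add: distrib_left)
    then show ?thesis
      using True \<open>r > 0\<close> by (simp add: field_simps)
  qed (use F_nonneg translation_energy_nonneg \<open>r > 0\<close> in simp)
  have "measure \<mu> U * translation_energy f u = (\<integral>v. translation_energy f u * indicator U v \<partial>\<mu>)"
    using assms by (simp add: measure_def ac_simps)
  also have "\<dots> \<le> (\<integral>v. 2 / r * ?E v + 2 / r * ?E (v + u) \<partial>\<mu>)"
    using assms integrable_translate_right[OF FD, of u] pointwise
    by (intro integral_mono integrable_mult_right integrable_real_indicator) (auto simp: sets_eq_borel)
  also have "\<dots> = 4 / r * (\<integral>v. ?E v \<partial>\<mu>)"
    using FD integrable_translate_right[OF FD, of u] integral_translate_right[OF FD, of u] by simp
  finally show ?thesis .
qed

lemma dirichlet_form_density_nonneg: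
  assumes "L2 \<mu> f" and "F \<in> borel_measurable \<mu>" and "\<And>x. F x \<ge> 0"
    and "prob_space (density \<mu> (\<lambda>x. ennreal (F x)))"
  shows "dirichlet_form \<mu> (density \<mu> (\<lambda>x. ennreal (F x))) f \<ge> 0"
  unfolding dirichlet_form_density(2)[OF assms]
  by (intro divide_nonneg_nonneg Bochner_Integration.integral_nonneg mult_nonneg_nonneg
      assms(3) translation_energy_nonneg) simp

lemma dirichlet_form_density_le:
  fixes F1 F2 :: "'a \<Rightarrow> real"
  defines "\<nu>1 \<equiv> density \<mu> (\<lambda>x. ennreal (F1 x))" and "\<nu>2 \<equiv> density \<mu> (\<lambda>x. ennreal (F2 x))"
  assumes f: "L2 \<mu> f"
    and F1: "F1 \<in> borel_measurable \<mu>" "\<And>x. F1 x \<ge> 0" "prob_space \<nu>1"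
    and F2: "F2 \<in> borel_measurable \<mu>" "\<And>x. F2 x \<ge> 0" "prob_space \<nu>2"
    and F2_lower: "\<forall>x \<in> setpow U 2. F2 x \<ge> r" and "r > 0"
    and "generates U" and "0 \<in> U" and "U \<in> sets borel" and "emeasure \<mu> U < \<infinity>" and "measure \<mu> U > 0"
    and moment: "integrable \<mu> (\<lambda>x. (real (word_length U x))\<^sup>2 * F1 x)"
  shows "dirichlet_form \<mu> \<nu>1 f
      \<le> 4 * (\<integral>x. (real (word_length U x))\<^sup>2 * F1 x \<partial>\<mu>) / (r * measure \<mu> U) * dirichlet_form \<mu> \<nu>2 f"
proof -
  note energy1 = dirichlet_form_density[OF f F1[unfolded \<nu>1_def]]
  note energy2 = dirichlet_form_density[OF f F2[unfolded \<nu>2_def]]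
  define K where "K = 8 / (r * measure \<mu> U)"
  define E where "E = dirichlet_form \<mu> \<nu>2 f"
  have "K > 0" "E \<ge> 0"
    using \<open>r > 0\<close> \<open>measure \<mu> U > 0\<close> dirichlet_form_density_nonneg[OF f F2[unfolded \<nu>2_def]]
    unfolding K_def E_def \<nu>2_def by simp_all
  have "measure \<mu> U * translation_energy f u \<le> 4 / r * (2 * E)" if "u \<in> U" for u
    unfolding E_def \<nu>2_def energy2(2)
    using measure_mult_translation_energy_le[OF f F2(2) energy2(1) F2_lower] assms that by simp
  then have "translation_energy f u \<le> K * E" if "u \<in> U" for u
    using that \<open>r > 0\<close> \<open>measure \<mu> U > 0\<close> unfolding K_def by (simp add: field_simps)
  then have bound: "translation_energy f y \<le> (real (word_length U y))\<^sup>2 * (K * E)" for y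
    using \<open>K > 0\<close> \<open>E \<ge> 0\<close> \<open>generates U\<close> by (intro translation_energy_le_word_length[OF f]) simp_all
  have "F1 y * translation_energy f y \<le> ((real (word_length U y))\<^sup>2 * F1 y) * (K * E)" for y
    using mult_left_mono[OF bound F1(2)] by (simp only: ac_simps)
  then have "(\<integral>y. F1 y * translation_energy f y \<partial>\<mu>) \<le> (\<integral>y. ((real (word_length U y))\<^sup>2 * F1 y) * (K * E) \<partial>\<mu>)"
    using energy1(1) moment by (intro integral_mono) simp_all
  then show ?thesis
    by (simp add: \<nu>1_def energy1(2) E_def K_def mult.left_commute)
qed

end

lemma right_invariant_measure_if_unimodular_haar:
  fixes \<mu> :: "'a::{topological_group_add, t2_space, second_countable_topology} measure"
    and U :: "'a set"
  assumes "haar_measure \<mu>" and "unimodular \<mu>" and "compact (closure U)" and "generates U"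
  shows "right_invariant_measure \<mu>"
proof -
  have "sigma_finite_measure \<mu>"
    using assms by (intro sigma_finite_if_generated_by_relatively_compact) (auto simp: haar_measure_def)
  moreover have "right_invariant_measure_axioms \<mu>"
    using assms unfolding haar_measure_def unimodular_def
    by (intro right_invariant_measure_axioms.intro) auto
  ultimately show ?thesis
    by (rule right_invariant_measure.intro)
qed

theorem proposition4:
  fixes \<mu> :: "'a::{topological_group_add, t2_space, second_countable_topology} measure"
    and F1 F2 :: "'a \<Rightarrow> real"
    and U :: "'a set"
    and r :: real
  assumes loc_compact: "locally compact (UNIV :: 'a set)"
    and comp_gen: "compactly_generated TYPE('a)"
    and haar: "haar_measure \<mu>"
    and unimod: "unimodular \<mu>"
    and F1_nonneg: "\<And>x. F1 x \<ge> 0" and F2_nonneg: "\<And>x. F2 x \<ge> 0"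
    and prob1: "prob_space (density \<mu> (\<lambda>x. ennreal (F1 x)))"
    and prob2: "prob_space (density \<mu> (\<lambda>x. ennreal (F2 x)))"
    and sym1: "\<And>x. F1 (- x) = F1 x" and sym2: "\<And>x. F2 (- x) = F2 x"
    and int1: "integrable \<mu> F1" and int2: "integrable \<mu> F2"
    and bdd1: "bounded (range F1)" and bdd2: "bounded (range F2)"
    and U_open: "open U" and U_e: "0 \<in> U" and U_relcpt: "compact (closure U)"
    and U_gen: "generates U"
    and r_pos: "r > 0"
    and F2_lower: "\<forall>x \<in> setpow U 2. F2 x \<ge> r"
    and moment: "integrable \<mu> (\<lambda>x. (real (word_length U x))\<^sup>2 * F1 x)"
  shows "\<exists>C > 1. \<forall>f. L2 \<mu> f \<longrightarrow>
           dirichlet_form \<mu> (density \<mu> (\<lambda>x. ennreal (F1 x))) f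
             \<le> C * dirichlet_form \<mu> (density \<mu> (\<lambda>x. ennreal (F2 x))) f"
proof -
  interpret right_invariant_measure \<mu>
    using right_invariant_measure_if_unimodular_haar[OF haar unimod U_relcpt U_gen] .
  have "emeasure \<mu> U \<le> emeasure \<mu> (closure U)"
    by (rule emeasure_mono[OF closure_subset]) (simp add: sets_eq_borel)
  then have U_finite: "emeasure \<mu> U < \<infinity>"
    using haar U_relcpt unfolding haar_measure_def by (blast intro: le_less_trans)
  have "emeasure \<mu> U > 0"
    using haar U_open U_e unfolding haar_measure_def by blast
  then have m_pos: "measure \<mu> U > 0"
    using U_finite by (simp add: measure_def enn2real_positive_iff)
  define c where "c = 4 * (\<integral>x. (real (word_length U x))\<^sup>2 * F1 x \<partial>\<mu>) / (r * measure \<mu> U)"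
  have "c \<ge> 0"
    using F1_nonneg r_pos m_pos unfolding c_def by simp
  show ?thesis
  proof (intro exI[of _ "2 + c"] conjI allI impI)
    fix f assume f: "L2 \<mu> f"
    have "dirichlet_form \<mu> (density \<mu> (\<lambda>x. ennreal (F1 x))) f
        \<le> c * dirichlet_form \<mu> (density \<mu> (\<lambda>x. ennreal (F2 x))) f"
      unfolding c_def using U_open U_e U_gen U_finite m_pos F1_nonneg F2_nonneg prob1 prob2 moment
      by (intro dirichlet_form_density_le[OF f borel_measurable_integrable[OF int1] _ _
            borel_measurable_integrable[OF int2] _ _ F2_lower r_pos]) simp_all
    also have "\<dots> \<le> (2 + c) * dirichlet_form \<mu> (density \<mu> (\<lambda>x. ennreal (F2 x))) f"
      using dirichlet_form_density_nonneg[OF f borel_measurable_integrable[OF int2] F2_nonneg prob2]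
      by (intro mult_right_mono) simp_all
    finally show "dirichlet_form \<mu> (density \<mu> (\<lambda>x. ennreal (F1 x))) f
        \<le> (2 + c) * dirichlet_form \<mu> (density \<mu> (\<lambda>x. ennreal (F2 x))) f" .
  qed (use \<open>c \<ge> 0\<close> in simp)
qed

end
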